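(* Fix $h\in\{2,\dots,H\}$. The Bayes optimal predictor for square loss over $D$, i.e. $f^\star=\arg\min_f\mathbb{E}_{(x,a,x',y)\sim D}[(f(x,a,x')-y)^2]$ over all measurable $f$, is $$f^\star(x,a,x')=\frac{T(g^\star(x')\mid g^\star(x),a)}{T(g^\star(x')\mid g^\star(x),a)+\rho_h(g^\star(x'))}.$$ Under the Realizability Assumption, $f^\star\in\mathcal{F}_N$ for any $N\ge N_{KD}$.
   Context: Block MDP: horizon $H$; finite latent states $\mathcal{S}=\sqcup_h\mathcal{S}_h$; countable observations $\mathcal{X}=\sqcup_h\mathcal{X}_h$; finite actions $\mathcal{A}$; start distribution $\mu$; transitions $T(\cdot\mid s,a)\in\Delta(\mathcal{S}_{h+1})$; emissions $q(\cdot\mid s)\in\Delta(\mathcal{X}_h)$ with disjoint supports, decoder $g^\star$; $T(x'\mid x,a)=q(x'\mid g^\star(x'))T(g^\star(x')\mid g^\star(x),a)$. $\Psi_{h-1}$ is a finite set of policies which is an $\alpha$-policy cover of $\mathcal{S}_{h-1}$ (i.e. $\max_{\pi\in\Psi_{h-1}}\mathbb{P}_\pi[s]\ge\alpha\max_{\pi'}\mathbb{P}_{\pi'}[s]$ for $s\in\mathcal{S}_{h-1}$). Distribution $D$ on $\mathcal{X}_{h-1}\times\mathcal{A}\times\mathcal{X}_h\times\{0,1\}$: draw two independent transitions $(x_j,a_j,x_j')$, $j=1,2$, each by choosing $\pi$ uniformly from $\Psi_{h-1}$, rolling in to $x_j\in\mathcal{X}_{h-1}$, taking $a_j\sim\mathrm{Unf}(\mathcal{A})$,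 and $x_j'\sim T(\cdot\mid x_j,a_j)$; with probability $1/2$ output $(x_1,a_1,x_1',1)$ and otherwise $(x_1,a_1,x_2',0)$. $\rho_h\in\Delta(\mathcal{X}_h)$ is the marginal law of $x_1'$, lifted to states by $\rho_h(s)=\sum_{x'\in g^{\star-1}(s)}\rho_h(x')$. Function classes: $\Phi_N$ a finite class of maps $\mathcal{X}\to[N]$, $\mathcal{W}_N$ all functions $[N]\times\mathcal{A}\times[N]\to[0,1]$, $\mathcal{F}_N=\{(x,a,x')\mapsto w(\phi^F(x),a,\phi^B(x'))\}$. KI: for full-support $u\in\Delta(\mathcal{X}\times\mathcal{A})$, $\mathbb{P}_u(x,a\mid x')\propto T(x'\mid x,a)u(x,a)$; backward KI = equal $\mathbb{P}_u(\cdot\mid x')$ for all such $u$, forward KI = equal $T(\cdot\mid x,a)$ for all $a$, KI = both; $N_{KD}$ = max over $h$ of the number of KI classes in $\mathcal{X}_h$. Realizability Assumption (function part): for all $h$, $N\ge N_{KD}$ and full-support $\rho\in\Delta(\mathcal{S}_h)$ there is $f_\rho\in\mathcal{F}_N$ with $f_\rho(x,a,x')=\frac{T(g^\star(x')\mid g^\star(x),a)}{T(g^\star(x')\mid g^\star(x),a)+\rho(g^\star(x'))}$ on $\mathcal{X}_{h-1}\times\mathcal{A}\times\mathcal{X}_h$. *)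

theory Defs
  imports "HOL-Probability.Probability"
begin

text \<open>A block MDP with horizon H, layer map on latent states, start distribution,
  latent transitions, emissions and decoder. Observations of layer h are the x with
  lay (dec x) = h.\<close>

record ('s, 'a, 'x) bmdp =
  hor   :: nat
  lay   :: "'s \<Rightarrow> nat"
  mu    :: "'s pmf"
  trans :: "'s \<Rightarrow> 'a \<Rightarrow> 's pmf"
  emit  :: "'s \<Rightarrow> 'x pmf"
  dec   :: "'x \<Rightarrow> 's"

definition valid_bmdp :: "('s, 'a, 'x) bmdp \<Rightarrow> bool" where
  "valid_bmdp M \<longleftrightarrow>
     hor M \<ge> 1 \<and>
     (\<forall>s. lay M s \<in> {1..hor M}) \<and>
     set_pmf (mu M) \<subseteq> {s. lay M s = 1} \<and>
     (\<forall>s a. lay M s < hor M \<longrightarrow> set_pmf (trans M s a) \<subseteq> {s'. lay M s' = lay M s + 1}) \<and>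
     (\<forall>s. set_pmf (emit M s) \<subseteq> {x. dec M x = s})"

definition Tobs :: "('s, 'a, 'x) bmdp \<Rightarrow> 'x \<Rightarrow> 'a \<Rightarrow> 'x \<Rightarrow> real" where
  "Tobs M x a x' = pmf (emit M (dec M x')) x' * pmf (trans M (dec M x) a) (dec M x')"

definition step_obs :: "('s, 'a, 'x) bmdp \<Rightarrow> 'x \<Rightarrow> 'a \<Rightarrow> 'x pmf" where
  "step_obs M x a = bind_pmf (trans M (dec M x) a) (emit M)"

text \<open>Policies are (randomized, Markov) maps from observations to action distributions.
  roll M p k is the law of the observation at layer k+1 when running p.\<close>
type_synonym ('x, 'a) policy = "'x \<Rightarrow> 'a pmf"

primrec roll :: "('s, 'a, 'x) bmdp \<Rightarrow> ('x, 'a) policy \<Rightarrow> nat \<Rightarrow> 'x pmf" where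
  "roll M p 0 = bind_pmf (mu M) (emit M)"
| "roll M p (Suc k) = bind_pmf (roll M p k) (\<lambda>x. bind_pmf (p x) (\<lambda>a. step_obs M x a))"

definition obs_dist :: "('s, 'a, 'x) bmdp \<Rightarrow> ('x, 'a) policy \<Rightarrow> nat \<Rightarrow> 'x pmf" where
  "obs_dist M p k = roll M p (k - 1)"

definition state_prob :: "('s, 'a, 'x) bmdp \<Rightarrow> ('x, 'a) policy \<Rightarrow> nat \<Rightarrow> 's \<Rightarrow> real" where
  "state_prob M p k s = pmf (map_pmf (dec M) (obs_dist M p k)) s"

definition policy_cover ::
  "('s, 'a, 'x) bmdp \<Rightarrow> ('x, 'a) policy set \<Rightarrow> real \<Rightarrow> nat \<Rightarrow> bool" where
  "policy_cover M Psi \<alpha> k \<longleftrightarrow>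
     (\<forall>s. lay M s = k \<longrightarrow>
        (MAX p\<in>Psi. state_prob M p k s) \<ge> \<alpha> * (SUP p'. state_prob M p' k s))"

definition trans_sample ::
  "('s, 'a::finite, 'x) bmdp \<Rightarrow> ('x, 'a) policy set \<Rightarrow> nat \<Rightarrow> ('x \<times> 'a \<times> 'x) pmf" where
  "trans_sample M Psi h =
     bind_pmf (pmf_of_set Psi) (\<lambda>p.
     bind_pmf (obs_dist M p (h - 1)) (\<lambda>x.
     bind_pmf (pmf_of_set (UNIV :: 'a set)) (\<lambda>a.
     bind_pmf (step_obs M x a) (\<lambda>x'. return_pmf (x, a, x')))))"

definition Ddist ::
  "('s, 'a::finite, 'x) bmdp \<Rightarrow> ('x, 'a) policy set \<Rightarrow> nat \<Rightarrow> ('x \<times> 'a \<times> 'x \<times> bool) pmf" where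
  "Ddist M Psi h =
     bind_pmf (trans_sample M Psi h) (\<lambda>(x1, a1, x1').
     bind_pmf (trans_sample M Psi h) (\<lambda>(x2, a2, x2').
     bind_pmf (bernoulli_pmf (1/2)) (\<lambda>b.
       return_pmf (if b then (x1, a1, x1', True) else (x1, a1, x2', False)))))"

definition rho_obs :: "('s, 'a::finite, 'x) bmdp \<Rightarrow> ('x, 'a) policy set \<Rightarrow> nat \<Rightarrow> 'x pmf" where
  "rho_obs M Psi h = map_pmf (\<lambda>(x, a, x'). x') (trans_sample M Psi h)"

definition rho_state :: "('s, 'a::finite, 'x) bmdp \<Rightarrow> ('x, 'a) policy set \<Rightarrow> nat \<Rightarrow> 's \<Rightarrow> real" where
  "rho_state M Psi h s = pmf (map_pmf (dec M) (rho_obs M Psi h)) s"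

text \<open>Expected square loss E_D[(f(x,a,x') - y)^2] (as an extended non-negative real, so it
  is well defined for every f).\<close>
definition sq_loss :: "('x \<times> 'a \<times> 'x \<times> bool) pmf \<Rightarrow> ('x \<Rightarrow> 'a \<Rightarrow> 'x \<Rightarrow> real) \<Rightarrow> ennreal" where
  "sq_loss D f = (\<integral>\<^sup>+ z. ennreal ((case z of (x, a, x', y) \<Rightarrow> (f x a x' - of_bool y)\<^sup>2)) \<partial>measure_pmf D)"

definition Pu :: "('s, 'a, 'x) bmdp \<Rightarrow> ('x \<times> 'a) pmf \<Rightarrow> 'x \<Rightarrow> ('x \<times> 'a) \<Rightarrow> real" where
  "Pu M u x' = (\<lambda>(x, a). Tobs M x a x' * pmf u (x, a) /
                 measure_pmf.expectation u (\<lambda>(y, b). Tobs M y b x'))"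

definition bwd_KI :: "('s, 'a, 'x) bmdp \<Rightarrow> 'x \<Rightarrow> 'x \<Rightarrow> bool" where
  "bwd_KI M x1 x2 \<longleftrightarrow> (\<forall>u :: ('x \<times> 'a) pmf. set_pmf u = UNIV \<longrightarrow> Pu M u x1 = Pu M u x2)"

text \<open>Forward KI: equal T(.|x,a) for all a (no transitions leave the last layer H).\<close>
definition fwd_KI :: "('s, 'a, 'x) bmdp \<Rightarrow> 'x \<Rightarrow> 'x \<Rightarrow> bool" where
  "fwd_KI M x1 x2 \<longleftrightarrow>
     (lay M (dec M x1) < hor M \<longrightarrow> (\<forall>a. Tobs M x1 a = Tobs M x2 a))"

definition KI :: "('s, 'a, 'x) bmdp \<Rightarrow> 'x \<Rightarrow> 'x \<Rightarrow> bool" where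
  "KI M x1 x2 \<longleftrightarrow> bwd_KI M x1 x2 \<and> fwd_KI M x1 x2"

definition KI_classes :: "('s, 'a, 'x) bmdp \<Rightarrow> nat \<Rightarrow> 'x set set" where
  "KI_classes M h = {x. lay M (dec M x) = h} //
     {(x1, x2). lay M (dec M x1) = h \<and> lay M (dec M x2) = h \<and> KI M x1 x2}"

definition N_KD :: "('s, 'a, 'x) bmdp \<Rightarrow> nat" where
  "N_KD M = Max ((\<lambda>h. card (KI_classes M h)) ` {1..hor M})"

definition valid_Phi :: "(nat \<Rightarrow> ('x \<Rightarrow> nat) set) \<Rightarrow> bool" where
  "valid_Phi Phi \<longleftrightarrow> (\<forall>N. finite (Phi N) \<and> (\<forall>\<phi>\<in>Phi N. \<forall>x. \<phi> x \<in> {1..N}))"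

definition W_cls :: "nat \<Rightarrow> (nat \<Rightarrow> 'a \<Rightarrow> nat \<Rightarrow> real) set" where
  "W_cls N = {w. \<forall>i\<in>{1..N}. \<forall>a. \<forall>j\<in>{1..N}. 0 \<le> w i a j \<and> w i a j \<le> 1}"

definition F_cls :: "(nat \<Rightarrow> ('x \<Rightarrow> nat) set) \<Rightarrow> nat \<Rightarrow> ('x \<Rightarrow> 'a \<Rightarrow> 'x \<Rightarrow> real) set" where
  "F_cls Phi N = {f. \<exists>\<phi>F\<in>Phi N. \<exists>\<phi>B\<in>Phi N. \<exists>w\<in>W_cls N.
                       f = (\<lambda>x a x'. w (\<phi>F x) a (\<phi>B x'))}"

text \<open>The function part of the Realizability Assumption.\<close>
definition realizable :: "('s, 'a, 'x) bmdp \<Rightarrow> (nat \<Rightarrow> ('x \<Rightarrow> nat) set) \<Rightarrow> bool" where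
  "realizable M Phi \<longleftrightarrow>
     (\<forall>h N (\<rho> :: 's pmf). N \<ge> N_KD M \<longrightarrow> set_pmf \<rho> = {s. lay M s = h} \<longrightarrow>
        (\<exists>f\<in>F_cls Phi N. \<forall>x a x'. lay M (dec M x) = h - 1 \<longrightarrow> lay M (dec M x') = h \<longrightarrow>
           f x a x' = pmf (trans M (dec M x) a) (dec M x') /
                      (pmf (trans M (dec M x) a) (dec M x') + pmf \<rho> (dec M x'))))"

end

theory Submission
  imports Defs
begin

(* Under D, the triple (x, a, x') carries label 1 with weight c T(s'|s,a) and label 0 with
   weight c rho_h(s'), where c is the roll-in weight of (x, a) times the emission probability
   of x'. For binary labels the square loss of any f exceeds that of the conditional probability
   f_star = T / (T + rho_h) of label 1 by the mass-weighted sum of (f - f_star)^2; this gives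
   optimality and uniqueness on the support.
   Realizability is only assumed for full-support rho, whereas rho_h may vanish. For a
   full-support rho with geometrically growing weights, T / (T + rho(s')) determines both s'
   and T unless T = 0, so f_star is a function of f_rho on the relevant layers; composing the
   weight table of f_rho with that function stays inside F_N. *)

section \<open>Bayes predictors for binary labels\<close>

definition label_sq_loss :: "('z \<times> bool) pmf \<Rightarrow> ('z \<Rightarrow> real) \<Rightarrow> ennreal" where
  "label_sq_loss D f = (\<integral>\<^sup>+ (z, y). ennreal ((f z - of_bool y)\<^sup>2) \<partial>measure_pmf D)"

definition bayes_predictor :: "('z \<times> bool) pmf \<Rightarrow> ('z \<Rightarrow> real) \<Rightarrow> bool" where
  "bayes_predictor D g \<longleftrightarrow> (\<forall>z. pmf D (z, True) = g z * (pmf D (z, True) + pmf D (z, False)))"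

lemma label_sq_loss_eq_sum:
  "label_sq_loss D f = (\<integral>\<^sup>+ z. ennreal (pmf D (z, True) * (f z - 1)\<^sup>2 + pmf D (z, False) * (f z)\<^sup>2)
     \<partial>count_space UNIV)"
proof -
  have "label_sq_loss D f = (\<integral>\<^sup>+ z. \<integral>\<^sup>+ y. ennreal (pmf D (z, y)) * ennreal ((f z - of_bool y)\<^sup>2)
      \<partial>count_space UNIV \<partial>count_space UNIV)"
    unfolding label_sq_loss_def nn_integral_measure_pmf
    using nn_integral_fst_count_space[of "\<lambda>(z, y). ennreal (pmf D (z, y)) * ennreal ((f z - of_bool y)\<^sup>2)"]
    by (simp add: case_prod_beta')
  also have "\<dots> = (\<integral>\<^sup>+ z. ennreal (pmf D (z, True) * (f z - 1)\<^sup>2 + pmf D (z, False) * (f z)\<^sup>2)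
     \<partial>count_space UNIV)"
    by (simp add: nn_integral_count_space_finite UNIV_bool ennreal_mult' ennreal_plus add.commute
        del: ennreal_plus_if)
  finally show ?thesis .
qed

lemma bayes_predictor_loss_decomp:
  assumes "bayes_predictor D g"
  shows "label_sq_loss D f = label_sq_loss D g +
    (\<integral>\<^sup>+ z. ennreal ((pmf D (z, True) + pmf D (z, False)) * (f z - g z)\<^sup>2) \<partial>count_space UNIV)"
proof -
  have pointwise: "p1 * (f z - 1)\<^sup>2 + p0 * (f z)\<^sup>2
      = (p1 * (g z - 1)\<^sup>2 + p0 * (g z)\<^sup>2) + (p1 + p0) * (f z - g z)\<^sup>2"
    if "p1 = g z * (p1 + p0)" for z and p1 p0 :: real
  proof -
    have "p1 * (f z - 1)\<^sup>2 + p0 * (f z)\<^sup>2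
      = (p1 * (g z - 1)\<^sup>2 + p0 * (g z)\<^sup>2) + (p1 + p0) * (f z - g z)\<^sup>2
        + 2 * (f z - g z) * (g z * (p1 + p0) - p1)"
      by (simp add: power2_eq_square algebra_simps)
    with that show ?thesis by simp
  qed
  show ?thesis
    using assms unfolding label_sq_loss_eq_sum bayes_predictor_def
    by (simp add: pointwise nn_integral_add[symmetric] ennreal_plus del: ennreal_plus_if)
qed

lemma label_mass_pos:
  "(z, y) \<in> set_pmf D \<Longrightarrow> 0 < pmf D (z, True) + pmf D (z, False)"
  using pmf_positive[of "(z, y)" D] by (cases y) (auto simp: add_pos_nonneg add_nonneg_pos)

lemma bayes_predictor_bounded:
  assumes "bayes_predictor D g" and "(z, y) \<in> set_pmf D"
  shows "0 \<le> g z \<and> g z \<le> 1"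
proof -
  let ?p1 = "pmf D (z, True)" and ?p0 = "pmf D (z, False)"
  have "0 < ?p1 + ?p0"
    using assms(2) by (rule label_mass_pos)
  moreover have "g z = ?p1 / (?p1 + ?p0)"
    using assms(1) calculation unfolding bayes_predictor_def by (simp add: eq_divide_eq)
  ultimately show ?thesis by simp
qed

lemma bayes_predictor_loss_le_1:
  assumes "bayes_predictor D g"
  shows "label_sq_loss D g \<le> 1"
proof -
  have "label_sq_loss D g \<le> (\<integral>\<^sup>+ _. 1 \<partial>measure_pmf D)"
    unfolding label_sq_loss_def
  proof (rule nn_integral_mono_AE, unfold AE_measure_pmf_iff, safe)
    fix z y assume "(z, y) \<in> set_pmf D"
    then have "0 \<le> g z \<and> g z \<le> 1" by (rule bayes_predictor_bounded[OF assms])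
    then have "(g z - of_bool y)\<^sup>2 \<le> 1" by (cases y) (auto simp: abs_square_le_1)
    then show "ennreal ((g z - of_bool y)\<^sup>2) \<le> 1" by simp
  qed
  then show ?thesis by simp
qed

lemma bayes_predictor_minimal:
  assumes "bayes_predictor D g"
  shows "label_sq_loss D g \<le> label_sq_loss D f"
  unfolding bayes_predictor_loss_decomp[OF assms, of f] by (rule add_increasing2) auto

lemma bayes_predictor_unique:
  assumes "bayes_predictor D g" and "label_sq_loss D f = label_sq_loss D g" and "(z, y) \<in> set_pmf D"
  shows "f z = g z"
proof -
  let ?w = "\<lambda>z. pmf D (z, True) + pmf D (z, False)"
  have "label_sq_loss D g + (\<integral>\<^sup>+ z. ennreal (?w z * (f z - g z)\<^sup>2) \<partial>count_space UNIV)
      = label_sq_loss D g + 0"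
    using bayes_predictor_loss_decomp[OF assms(1), of f] assms(2) by (metis add.right_neutral)
  moreover have "label_sq_loss D g \<noteq> \<infinity>"
    using bayes_predictor_loss_le_1[OF assms(1)] by (auto simp: top_unique)
  ultimately have "(\<integral>\<^sup>+ z. ennreal (?w z * (f z - g z)\<^sup>2) \<partial>count_space UNIV) = 0"
    using ennreal_add_left_cancel by blast
  then have "?w z = 0 \<or> f z = g z"
    by (simp add: nn_integral_0_iff_AE AE_count_space)
  moreover have "0 < ?w z"
    using assms(3) by (rule label_mass_pos)
  ultimately show ?thesis by simp
qed

section \<open>The contrastive distribution\<close>

lemma pmf_bind_map_inj:
  assumes inj: "\<And>u v u' v'. g u v = g u' v' \<Longrightarrow> u = u' \<and> v = v'"
  shows "pmf (bind_pmf p (\<lambda>u. map_pmf (g u) (K u))) (g u v) = pmf p u * pmf (K u) v"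
proof -
  have "pmf (map_pmf (g u') (K u')) (g u v) = indicator {u} u' * pmf (K u) v" for u'
  proof (cases "u' = u")
    case True
    have "inj (g u)" using inj by (auto intro: injI)
    with True show ?thesis by (simp add: pmf_map_inj')
  next
    case False
    then have "g u v \<notin> set_pmf (map_pmf (g u') (K u'))" using inj by auto
    with False show ?thesis by (simp add: pmf_eq_0_set_pmf)
  qed
  then show ?thesis by (simp add: pmf_bind measure_pmf_single)
qed

lemma pmf_bind_emit:
  assumes "valid_bmdp M"
  shows "pmf (bind_pmf \<nu> (emit M)) x = pmf \<nu> (dec M x) * pmf (emit M (dec M x)) x"
proof -
  define c where "c = pmf (emit M (dec M x)) x"
  have "pmf (emit M s) x = indicator {dec M x} s * c" for s
  proof (cases "s = dec M x")
    case False
    then have "x \<notin> set_pmf (emit M s)" using assms unfolding valid_bmdp_def by blast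
    with False show ?thesis by (simp add: pmf_eq_0_set_pmf)
  qed (simp add: c_def)
  then have "pmf (bind_pmf \<nu> (emit M)) x = pmf \<nu> (dec M x) * c"
    by (simp add: pmf_bind measure_pmf_single)
  then show ?thesis unfolding c_def .
qed

lemma map_dec_bind_emit:
  assumes "valid_bmdp M"
  shows "map_pmf (dec M) (bind_pmf \<nu> (emit M)) = \<nu>"
proof -
  have "map_pmf (dec M) (emit M s) = return_pmf s" for s
    using assms unfolding valid_bmdp_def by (auto simp: map_pmf_eq_return_pmf_iff)
  then show ?thesis by (simp add: map_bind_pmf bind_return_pmf')
qed

lemma pmf_step_obs:
  "valid_bmdp M \<Longrightarrow>
    pmf (step_obs M x a) x' = pmf (trans M (dec M x) a) (dec M x') * pmf (emit M (dec M x')) x'"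
  unfolding step_obs_def by (rule pmf_bind_emit)

definition rollin_pmf :: "('s, 'a::finite, 'x) bmdp \<Rightarrow> ('x, 'a) policy set \<Rightarrow> nat \<Rightarrow> ('x \<times> 'a) pmf" where
  "rollin_pmf M Psi h =
     bind_pmf (pmf_of_set Psi) (\<lambda>p. bind_pmf (obs_dist M p (h - 1)) (\<lambda>x.
     map_pmf (Pair x) (pmf_of_set UNIV)))"

lemma trans_sample_eq:
  "trans_sample M Psi h =
     bind_pmf (rollin_pmf M Psi h) (\<lambda>(x, a). map_pmf (\<lambda>x'. (x, a, x')) (step_obs M x a))"
  unfolding trans_sample_def rollin_pmf_def
  by (simp add: bind_assoc_pmf bind_return_pmf map_pmf_def)

lemma rho_obs_eq: "rho_obs M Psi h = bind_pmf (rollin_pmf M Psi h) (\<lambda>(x, a). step_obs M x a)"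
  unfolding rho_obs_def trans_sample_eq map_bind_pmf
  by (simp add: pmf.map_comp o_def case_prod_beta')

lemma pmf_rho_obs:
  assumes "valid_bmdp M"
  shows "pmf (rho_obs M Psi h) x' = rho_state M Psi h (dec M x') * pmf (emit M (dec M x')) x'"
proof -
  obtain \<nu> where \<nu>: "rho_obs M Psi h = bind_pmf \<nu> (emit M)"
    unfolding rho_obs_eq step_obs_def by (auto simp: case_prod_beta' bind_assoc_pmf[symmetric])
  show ?thesis
    unfolding rho_state_def \<nu> map_dec_bind_emit[OF assms] by (rule pmf_bind_emit[OF assms])
qed

lemma Ddist_eq_mixture:
  fixes M :: "('s, 'a::finite, 'x) bmdp"
  shows "Ddist M Psi h =
     bind_pmf (pair_pmf (bernoulli_pmf (1/2)) (rollin_pmf M Psi h)) (\<lambda>(b, x, a).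
       map_pmf (\<lambda>x'. (x, a, x', b)) (if b then step_obs M x a else rho_obs M Psi h))"
proof -
  let ?T = "trans_sample M Psi h" and ?R = "rollin_pmf M Psi h"
  define F where "F b t1 t2 = (if b then (fst t1, fst (snd t1), snd (snd t1), True)
                               else (fst t1, fst (snd t1), snd (snd t2), False))"
    for b and t1 t2 :: "'x \<times> 'a \<times> 'x"
  have "Ddist M Psi h = bind_pmf ?T (\<lambda>t1. bind_pmf ?T (\<lambda>t2.
      bind_pmf (bernoulli_pmf (1/2)) (\<lambda>b. return_pmf (F b t1 t2))))"
    unfolding Ddist_def F_def by (simp add: case_prod_beta')
  also have "\<dots> = bind_pmf (bernoulli_pmf (1/2)) (\<lambda>b.
      bind_pmf ?T (\<lambda>t1. bind_pmf ?T (\<lambda>t2. return_pmf (F b t1 t2))))"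
  proof -
    have "\<And>t1. bind_pmf ?T (\<lambda>t2. bind_pmf (bernoulli_pmf (1/2)) (\<lambda>b. return_pmf (F b t1 t2)))
        = bind_pmf (bernoulli_pmf (1/2)) (\<lambda>b. bind_pmf ?T (\<lambda>t2. return_pmf (F b t1 t2)))"
      by (rule bind_commute_pmf)
    then show ?thesis by (simp only: bind_commute_pmf[of ?T "bernoulli_pmf (1/2)"])
  qed
  also have "\<dots> = bind_pmf (bernoulli_pmf (1/2)) (\<lambda>b. bind_pmf ?R (\<lambda>(x, a).
       map_pmf (\<lambda>x'. (x, a, x', b)) (if b then step_obs M x a else rho_obs M Psi h)))"
  proof (intro bind_pmf_cong refl)
    fix b
    show "bind_pmf ?T (\<lambda>t1. bind_pmf ?T (\<lambda>t2. return_pmf (F b t1 t2))) = bind_pmf ?R (\<lambda>(x, a).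
       map_pmf (\<lambda>x'. (x, a, x', b)) (if b then step_obs M x a else rho_obs M Psi h))"
      unfolding F_def
      by (cases b)
        (simp_all add: trans_sample_eq rho_obs_def map_pmf_def bind_assoc_pmf bind_return_pmf
          case_prod_beta')
  qed
  also have "\<dots> = bind_pmf (pair_pmf (bernoulli_pmf (1/2)) ?R) (\<lambda>(b, x, a).
       map_pmf (\<lambda>x'. (x, a, x', b)) (if b then step_obs M x a else rho_obs M Psi h))"
    by (simp add: pair_pmf_def bind_assoc_pmf bind_return_pmf)
  finally show ?thesis .
qed

lemma pmf_Ddist:
  fixes M :: "('s, 'a::finite, 'x) bmdp"
  shows "pmf (Ddist M Psi h) (x, a, x', y) =
    pmf (rollin_pmf M Psi h) (x, a) * pmf (if y then step_obs M x a else rho_obs M Psi h) x' / 2"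
proof -
  define g :: "bool \<times> 'x \<times> 'a \<Rightarrow> 'x \<Rightarrow> 'x \<times> 'a \<times> 'x \<times> bool" where
    "g = (\<lambda>(b, x, a) x'. (x, a, x', b))"
  define K where "K = (\<lambda>(b, x, a). if b then step_obs M x a else rho_obs M Psi h)"
  have "Ddist M Psi h =
      bind_pmf (pair_pmf (bernoulli_pmf (1/2)) (rollin_pmf M Psi h)) (\<lambda>u. map_pmf (g u) (K u))"
    unfolding Ddist_eq_mixture g_def K_def by (simp add: case_prod_beta')
  moreover have "(x, a, x', y) = g (y, x, a) x'" unfolding g_def by simp
  moreover have "g u v = g u' v' \<Longrightarrow> u = u' \<and> v = v'" for u u' v v'
    unfolding g_def by (auto split: prod.splits)
  ultimately show ?thesis by (simp add: pmf_bind_map_inj pmf_pair K_def)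
qed

definition trans_ratio :: "('s, 'a, 'x) bmdp \<Rightarrow> ('s \<Rightarrow> real) \<Rightarrow> 'x \<Rightarrow> 'a \<Rightarrow> 'x \<Rightarrow> real" where
  "trans_ratio M r x a x' =
     pmf (trans M (dec M x) a) (dec M x') / (pmf (trans M (dec M x) a) (dec M x') + r (dec M x'))"

lemma trans_ratio_bounded:
  assumes "\<And>s. 0 \<le> r s"
  shows "0 \<le> trans_ratio M r x a x' \<and> trans_ratio M r x a x' \<le> 1"
proof -
  have "0 \<le> pmf (trans M (dec M x) a) (dec M x')" and "0 \<le> r (dec M x')"
    by (simp_all add: assms)
  then show ?thesis unfolding trans_ratio_def by (simp add: divide_le_eq_1 del: pmf_nonneg) linarith
qed

definition detach_label :: "'x \<times> 'a \<times> 'x \<times> bool \<Rightarrow> ('x \<times> 'a \<times> 'x) \<times> bool" where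
  "detach_label = (\<lambda>(x, a, x', y). ((x, a, x'), y))"

lemma inj_detach_label: "inj detach_label"
  unfolding detach_label_def by (auto intro: injI)

lemma sq_loss_eq_label_sq_loss:
  "sq_loss D f = label_sq_loss (map_pmf detach_label D) (\<lambda>(x, a, x'). f x a x')"
  unfolding sq_loss_def label_sq_loss_def detach_label_def by (simp add: case_prod_beta')

lemma bayes_predictor_Ddist:
  fixes M :: "('s, 'a::finite, 'x) bmdp"
  assumes "valid_bmdp M"
  shows "bayes_predictor (map_pmf detach_label (Ddist M Psi h))
           (\<lambda>(x, a, x'). trans_ratio M (rho_state M Psi h) x a x')"
  unfolding bayes_predictor_def
proof (clarify)
  fix x a x'
  let ?T = "pmf (trans M (dec M x) a) (dec M x')" and ?r = "rho_state M Psi h (dec M x')"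
  define c where "c = pmf (rollin_pmf M Psi h) (x, a) * pmf (emit M (dec M x')) x' / 2"
  have pmf_D: "pmf (map_pmf detach_label (Ddist M Psi h)) ((x, a, x'), y) = c * (if y then ?T else ?r)"
    for y
    using pmf_map_inj'[OF inj_detach_label, of _ "(x, a, x', y)"]
    by (simp add: detach_label_def pmf_Ddist pmf_step_obs pmf_rho_obs assms c_def)
  have "0 \<le> ?T" and "0 \<le> ?r" by (simp_all add: rho_state_def)
  then have "?T / (?T + ?r) * (?T + ?r) = ?T"
    by (cases "?T + ?r = 0") (auto simp del: pmf_nonneg)
  then have "c * ?T = ?T / (?T + ?r) * (c * ?T + c * ?r)"
    by (metis distrib_left mult.left_commute)
  then show "pmf (map_pmf detach_label (Ddist M Psi h)) ((x, a, x'), True) =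
       trans_ratio M (rho_state M Psi h) x a x' *
       (pmf (map_pmf detach_label (Ddist M Psi h)) ((x, a, x'), True) +
        pmf (map_pmf detach_label (Ddist M Psi h)) ((x, a, x'), False))"
    unfolding pmf_D trans_ratio_def by simp
qed

section \<open>Realizability for arbitrary weights\<close>

lemma exists_pmf_geometric_weights:
  fixes A :: "'s::countable set" and t :: real
  assumes "finite A" and "A \<noteq> {}" and "1 \<le> t"
  shows "\<exists>\<rho>. set_pmf \<rho> = A \<and>
    (\<forall>s1\<in>A. \<forall>s2\<in>A. to_nat s1 < to_nat s2 \<longrightarrow> t * pmf \<rho> s1 \<le> pmf \<rho> s2)"
proof -
  define S where "S = (\<Sum>s\<in>A. t ^ to_nat s)"
  have "0 < S"
    unfolding S_def using assms by (intro sum_pos) auto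
  define g where "g s = indicator A s * t ^ to_nat s / S" for s
  have g_nonneg: "0 \<le> g s" for s
    unfolding g_def using \<open>0 < S\<close> assms(3) by simp
  have "ennreal (g s) = ennreal (t ^ to_nat s / S) * indicator A s" for s
    unfolding g_def by (simp add: indicator_def)
  then have "(\<integral>\<^sup>+ s. ennreal (g s) \<partial>count_space UNIV) = (\<Sum>s\<in>A. ennreal (t ^ to_nat s / S))"
    using assms(1) by (simp add: nn_integral_indicator_finite)
  also have "\<dots> = ennreal (\<Sum>s\<in>A. t ^ to_nat s / S)"
    using assms(3) \<open>0 < S\<close> by (simp add: sum_ennreal)
  also have "\<dots> = 1"
    using \<open>0 < S\<close> by (simp add: S_def sum_divide_distrib[symmetric])
  finally have g_sum: "(\<integral>\<^sup>+ s. ennreal (g s) \<partial>count_space UNIV) = 1" .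
  define \<rho> where "\<rho> = embed_pmf g"
  have pmf_\<rho>: "pmf \<rho> s = g s" for s
    unfolding \<rho>_def using g_nonneg g_sum by (rule pmf_embed_pmf)
  show ?thesis
  proof (intro exI conjI ballI impI)
    show "set_pmf \<rho> = A"
      unfolding set_pmf_eq pmf_\<rho> g_def using \<open>0 < S\<close> assms(3) by (auto simp: indicator_def)
  next
    fix s1 s2 assume "s1 \<in> A" "s2 \<in> A" "to_nat s1 < to_nat s2"
    then have "t * t ^ to_nat s1 \<le> t ^ to_nat s2"
      using assms(3) by (metis power_Suc power_increasing Suc_le_eq)
    then show "t * pmf \<rho> s1 \<le> pmf \<rho> s2"
      unfolding pmf_\<rho> g_def using \<open>0 < S\<close> \<open>s1 \<in> A\<close> \<open>s2 \<in> A\<close>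
      by (simp add: divide_right_mono)
  qed
qed

definition separating_pmf :: "'s pmf \<Rightarrow> real set \<Rightarrow> bool" where
  "separating_pmf \<rho> U \<longleftrightarrow> (\<forall>s1\<in>set_pmf \<rho>. \<forall>s2\<in>set_pmf \<rho>. \<forall>u1\<in>U. \<forall>u2\<in>U.
     s1 \<noteq> s2 \<longrightarrow> u1 * pmf \<rho> s2 = u2 * pmf \<rho> s1 \<longrightarrow> u1 = 0 \<and> u2 = 0)"

lemma exists_separating_pmf:
  fixes A :: "'s::countable set" and U :: "real set"
  assumes "finite A" and "A \<noteq> {}" and "finite U" and "\<forall>u\<in>U. 0 \<le> u"
  shows "\<exists>\<rho>. set_pmf \<rho> = A \<and> separating_pmf \<rho> U"
proof (cases "U \<subseteq> {0}")
  case True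
  then show ?thesis
    using assms(1,2) unfolding separating_pmf_def by (intro exI[of _ "pmf_of_set A"]) auto
next
  case False
  define m where "m = Min (U \<inter> {0<..})"
  define K where "K = Max U"
  have "U \<inter> {0<..} \<noteq> {}"
    using False assms(4) by force
  then have "m \<in> U \<inter> {0<..}"
    unfolding m_def using assms(3) by (intro Min_in) auto
  have m_le: "\<And>u. u \<in> U \<Longrightarrow> 0 < u \<Longrightarrow> m \<le> u"
    unfolding m_def using assms(3) by (intro Min_le) auto
  have "0 < m" and "m \<le> K" and le_K: "\<And>u. u \<in> U \<Longrightarrow> u \<le> K"
    unfolding K_def using \<open>m \<in> U \<inter> {0<..}\<close> assms(3) by auto
  define t where "t = 2 * K / m"
  \<comment> \<open>If to_nat s1 < to_nat s2, then m * t = 2 * K lets any nonzero u1 * pmf \<rho> s2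
    exceed u2 * pmf \<rho> s1.\<close>
  have "1 \<le> t" and "m * t = 2 * K"
    unfolding t_def using \<open>0 < m\<close> \<open>m \<le> K\<close> by (simp_all add: field_simps)
  then obtain \<rho> where set_\<rho>: "set_pmf \<rho> = A"
    and geometric: "\<And>s1 s2. s1 \<in> A \<Longrightarrow> s2 \<in> A \<Longrightarrow> to_nat s1 < to_nat s2 \<Longrightarrow>
      t * pmf \<rho> s1 \<le> pmf \<rho> s2"
    using exists_pmf_geometric_weights[OF assms(1,2)] by blast
  have pos: "0 < pmf \<rho> s" if "s \<in> A" for s
    using that set_\<rho> by (simp add: pmf_positive)
  have ordered: "u1 = 0 \<and> u2 = 0"
    if "s1 \<in> A" "s2 \<in> A" "u1 \<in> U" "u2 \<in> U" "to_nat s1 < to_nat s2"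
      and eq: "u1 * pmf \<rho> s2 = u2 * pmf \<rho> s1" for s1 s2 u1 u2
  proof -
    have "u1 = 0"
    proof (rule ccontr)
      assume "u1 \<noteq> 0"
      then have "m \<le> u1" using m_le assms(4) that(3) by force
      have "u2 * pmf \<rho> s1 < 2 * K * pmf \<rho> s1"
        using le_K[OF that(4)] pos[OF that(1)] \<open>0 < m\<close> \<open>m \<le> K\<close> by simp
      also have "\<dots> = m * (t * pmf \<rho> s1)" using \<open>m * t = 2 * K\<close> by simp
      also have "\<dots> \<le> u1 * pmf \<rho> s2"
        using \<open>m \<le> u1\<close> \<open>0 < m\<close> geometric[OF that(1,2,5)] pos[OF that(1)] \<open>1 \<le> t\<close>
        by (intro mult_mono) auto
      finally show False using eq by simp
    qed
    with eq pos[OF that(1)] show ?thesis by simp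
  qed
  show ?thesis
    unfolding separating_pmf_def
  proof (intro exI[of _ \<rho>] conjI[OF set_\<rho>] ballI impI)
    fix s1 s2 u1 u2
    assume "s1 \<in> set_pmf \<rho>" "s2 \<in> set_pmf \<rho>" "u1 \<in> U" "u2 \<in> U" "s1 \<noteq> s2"
      and "u1 * pmf \<rho> s2 = u2 * pmf \<rho> s1"
    moreover have "to_nat s1 < to_nat s2 \<or> to_nat s2 < to_nat s1"
      using \<open>s1 \<noteq> s2\<close> by (metis linorder_neqE_nat to_nat_split)
    ultimately show "u1 = 0 \<and> u2 = 0"
      using ordered[of s1 s2 u1 u2] ordered[of s2 s1 u2 u1] set_\<rho> by auto
  qed
qed

lemma ratio_eq_imp_cross_eq:
  fixes u1 u2 p1 p2 :: real
  assumes "0 \<le> u1" "0 \<le> u2" "0 < p1" "0 < p2" and "u1 / (u1 + p1) = u2 / (u2 + p2)"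
  shows "u1 * p2 = u2 * p1"
  using assms by (simp add: field_simps add_nonneg_pos)

lemma trans_ratio_determined:
  assumes "separating_pmf \<rho> (range (\<lambda>(s, a, s'). pmf (trans M s a) s'))"
    and "dec M x' \<in> set_pmf \<rho>" and "dec M y' \<in> set_pmf \<rho>"
    and "trans_ratio M (pmf \<rho>) x a x' = trans_ratio M (pmf \<rho>) y b y'"
  shows "trans_ratio M r x a x' = trans_ratio M r y b y'"
proof -
  let ?u1 = "pmf (trans M (dec M x) a) (dec M x')"
    and ?u2 = "pmf (trans M (dec M y) b) (dec M y')"
  have cross: "?u1 * pmf \<rho> (dec M y') = ?u2 * pmf \<rho> (dec M x')"
    using assms(2-4) unfolding trans_ratio_def
    by (intro ratio_eq_imp_cross_eq) (simp_all add: pmf_positive)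
  show ?thesis
  proof (cases "dec M x' = dec M y'")
    case True
    then have "?u1 = ?u2" using cross assms(2) by (simp add: set_pmf_iff)
    with True show ?thesis unfolding trans_ratio_def by simp
  next
    case False
    have "?u1 \<in> range (\<lambda>(s, a, s'). pmf (trans M s a) s')"
      by (rule range_eqI[of _ _ "(dec M x, a, dec M x')"]) simp
    moreover have "?u2 \<in> range (\<lambda>(s, a, s'). pmf (trans M s a) s')"
      by (rule range_eqI[of _ _ "(dec M y, b, dec M y')"]) simp
    ultimately have "?u1 = 0 \<and> ?u2 = 0"
      using False assms(1-3) cross unfolding separating_pmf_def by blast
    then show ?thesis unfolding trans_ratio_def by simp
  qed
qed

lemma F_cls_comp:
  assumes "f \<in> F_cls Phi N" and "\<And>r. 0 \<le> G r \<and> G r \<le> 1"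
  shows "(\<lambda>x a x'. G (f x a x')) \<in> F_cls Phi N"
proof -
  obtain \<phi>F \<phi>B w where "\<phi>F \<in> Phi N" "\<phi>B \<in> Phi N"
    and f: "f = (\<lambda>x a x'. w (\<phi>F x) a (\<phi>B x'))"
    using assms(1) unfolding F_cls_def by blast
  moreover have "\<exists>w'\<in>W_cls N. (\<lambda>x a x'. G (f x a x')) = (\<lambda>x a x'. w' (\<phi>F x) a (\<phi>B x'))"
    using assms(2) unfolding f W_cls_def by (intro bexI[of _ "\<lambda>i a j. G (w i a j)"]) simp_all
  ultimately show ?thesis
    unfolding F_cls_def by blast
qed

lemma F_cls_if_determined:
  assumes "f \<in> F_cls Phi N"
    and bounded: "\<And>x a x'. P x a x' \<Longrightarrow> 0 \<le> g x a x' \<and> g x a x' \<le> 1"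
    and determined: "\<And>x a x' y b y'. P x a x' \<Longrightarrow> P y b y' \<Longrightarrow> f x a x' = f y b y' \<Longrightarrow>
      g x a x' = g y b y'"
  shows "\<exists>f'\<in>F_cls Phi N. \<forall>x a x'. P x a x' \<longrightarrow> f' x a x' = g x a x'"
proof -
  define Z where "Z = {(x, a, x'). P x a x'}"
  define F where "F = (\<lambda>(x, a, x'). f x a x')"
  define g' where "g' = (\<lambda>(x, a, x'). g x a x')"
  have g'_bounded: "0 \<le> g' z \<and> g' z \<le> 1" if "z \<in> Z" for z
    using that bounded unfolding Z_def g'_def by (cases z) simp
  have g'_determined: "g' z1 = g' z2" if "z1 \<in> Z" "z2 \<in> Z" "F z1 = F z2" for z1 z2
  proof -
    obtain x a x' y b y' where "z1 = (x, a, x')" and "z2 = (y, b, y')"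
      by (cases z1, cases z2) auto
    then show ?thesis
      using that determined[of x a x' y b y'] unfolding Z_def F_def g'_def by simp
  qed
  define G where "G r = (if r \<in> F ` Z then g' (inv_into Z F r) else 0)" for r
  have "0 \<le> G r \<and> G r \<le> 1" for r
    unfolding G_def by (simp add: g'_bounded inv_into_into)
  then have "(\<lambda>x a x'. G (f x a x')) \<in> F_cls Phi N"
    by (rule F_cls_comp[OF assms(1)])
  moreover have "G (F z) = g' z" if "z \<in> Z" for z
  proof -
    have "inv_into Z F (F z) \<in> Z" and "F (inv_into Z F (F z)) = F z"
      using that by (simp_all add: inv_into_into f_inv_into_f)
    then show ?thesis
      unfolding G_def using that g'_determined[of "inv_into Z F (F z)" z] by simp
  qed
  then have "G (f x a x') = g x a x'" if "P x a x'" for x a x'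
    using that unfolding Z_def F_def g'_def by force
  ultimately show ?thesis by (intro bexI[of _ "\<lambda>x a x'. G (f x a x')"]) auto
qed

lemma realizableD:
  assumes "realizable M Phi" and "N_KD M \<le> N" and "set_pmf \<rho> = {s. lay M s = h}"
  shows "\<exists>f\<in>F_cls Phi N. \<forall>x a x'. lay M (dec M x) = h - 1 \<longrightarrow> lay M (dec M x') = h \<longrightarrow>
           f x a x' = trans_ratio M (pmf \<rho>) x a x'"
  using assms(1)[unfolded realizable_def, rule_format, OF assms(2,3)]
  by (simp add: trans_ratio_def)

lemma realizable_trans_ratio:
  fixes M :: "('s::finite, 'a::finite, 'x) bmdp"
  assumes "realizable M Phi" and "N_KD M \<le> N" and "\<And>s. 0 \<le> r s"
  shows "\<exists>f\<in>F_cls Phi N. \<forall>x a x'. lay M (dec M x) = h - 1 \<longrightarrow> lay M (dec M x') = h \<longrightarrow>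
           f x a x' = trans_ratio M r x a x'"
proof (cases "\<exists>s. lay M s = h")
  case False
  \<comment> \<open>The claim is vacuous, but F_cls might be empty; realizability at the layer of any
    state provides a member.\<close>
  obtain s0 :: 's where True by blast
  let ?L = "{s. lay M s = lay M s0}"
  have "set_pmf (pmf_of_set ?L) = ?L"
    by (intro set_pmf_of_set) auto
  from realizableD[OF assms(1,2) this]
  obtain f :: "'x \<Rightarrow> 'a \<Rightarrow> 'x \<Rightarrow> real" where "f \<in> F_cls Phi N"
    by blast
  with False show ?thesis by blast
next
  case True
  let ?A = "{s. lay M s = h}" and ?U = "range (\<lambda>(s, a, s'). pmf (trans M s a) s')"
  have "finite ?A" and "?A \<noteq> {}" and "finite ?U" and "\<forall>u\<in>?U. 0 \<le> u"
    using True by auto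
  from exists_separating_pmf[OF this] obtain \<rho>
    where set_\<rho>: "set_pmf \<rho> = ?A" and "separating_pmf \<rho> ?U"
    by blast
  from realizableD[OF assms(1,2) set_\<rho>] obtain f where "f \<in> F_cls Phi N"
    and f_eq: "\<forall>x a x'. lay M (dec M x) = h - 1 \<longrightarrow> lay M (dec M x') = h \<longrightarrow>
      f x a x' = trans_ratio M (pmf \<rho>) x a x'"
    by blast
  have "\<exists>f'\<in>F_cls Phi N. \<forall>x a x'. lay M (dec M x) = h - 1 \<and> lay M (dec M x') = h \<longrightarrow>
      f' x a x' = trans_ratio M r x a x'"
  proof (rule F_cls_if_determined[OF \<open>f \<in> F_cls Phi N\<close>])
    show "0 \<le> trans_ratio M r x a x' \<and> trans_ratio M r x a x' \<le> 1" for x a x'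
      using assms(3) by (rule trans_ratio_bounded)
  next
    fix x a x' y b y'
    assume x: "lay M (dec M x) = h - 1 \<and> lay M (dec M x') = h"
      and y: "lay M (dec M y) = h - 1 \<and> lay M (dec M y') = h" and "f x a x' = f y b y'"
    then have "trans_ratio M (pmf \<rho>) x a x' = trans_ratio M (pmf \<rho>) y b y'"
      using f_eq by metis
    moreover have "dec M x' \<in> set_pmf \<rho>" and "dec M y' \<in> set_pmf \<rho>"
      using x y set_\<rho> by simp_all
    ultimately show "trans_ratio M r x a x' = trans_ratio M r y b y'"
      using trans_ratio_determined[OF \<open>separating_pmf \<rho> ?U\<close>] by blast
  qed
  then show ?thesis by auto
qed

theorem mainTheorem10:
  fixes M :: "('s::finite, 'a::finite, 'x::countable) bmdp"
    and Psi :: "('x, 'a) policy set"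
    and \<alpha> :: real and h :: nat
    and Phi :: "nat \<Rightarrow> ('x \<Rightarrow> nat) set"
  assumes "valid_bmdp M"
    and "h \<in> {2..hor M}"
    and "finite Psi" and "Psi \<noteq> {}"
    and "policy_cover M Psi \<alpha> (h - 1)"
    and "valid_Phi Phi"
  defines "fstar \<equiv> (\<lambda>x a x'. pmf (trans M (dec M x) a) (dec M x') /
              (pmf (trans M (dec M x) a) (dec M x') + rho_state M Psi h (dec M x')))"
  shows "(\<forall>f. sq_loss (Ddist M Psi h) fstar \<le> sq_loss (Ddist M Psi h) f)
       \<and> (\<forall>f. sq_loss (Ddist M Psi h) f = sq_loss (Ddist M Psi h) fstar \<longrightarrow>
              (\<forall>x a x' y. (x, a, x', y) \<in> set_pmf (Ddist M Psi h) \<longrightarrow> f x a x' = fstar x a x'))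
       \<and> (realizable M Phi \<longrightarrow>
            (\<forall>N \<ge> N_KD M. \<exists>f\<in>F_cls Phi N. \<forall>x a x'.
               lay M (dec M x) = h - 1 \<longrightarrow> lay M (dec M x') = h \<longrightarrow> f x a x' = fstar x a x'))"
proof -
  have fstar: "fstar = trans_ratio M (rho_state M Psi h)"
    unfolding fstar_def by (simp add: fun_eq_iff trans_ratio_def)
  let ?D = "map_pmf detach_label (Ddist M Psi h)"
  have bayes: "bayes_predictor ?D (\<lambda>(x, a, x'). fstar x a x')"
    unfolding fstar by (rule bayes_predictor_Ddist[OF assms(1)])
  have "sq_loss (Ddist M Psi h) fstar \<le> sq_loss (Ddist M Psi h) f" for f
    unfolding sq_loss_eq_label_sq_loss by (rule bayes_predictor_minimal[OF bayes])
  moreover have "f x a x' = fstar x a x'"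
    if "sq_loss (Ddist M Psi h) f = sq_loss (Ddist M Psi h) fstar"
      and "(x, a, x', y) \<in> set_pmf (Ddist M Psi h)" for f x a x' y
  proof -
    have "((x, a, x'), y) \<in> set_pmf ?D"
      using that(2) unfolding detach_label_def by force
    then show ?thesis
      using bayes_predictor_unique[OF bayes] that(1) unfolding sq_loss_eq_label_sq_loss
      by fastforce
  qed
  moreover have "rho_state M Psi h s \<ge> 0" for s
    by (simp add: rho_state_def)
  ultimately show ?thesis
    unfolding fstar using realizable_trans_ratio by blast
qed

end
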